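(* Let $q$ be a prime power, $n=q^4-1$, and let $I_x$ be a cyclotomic coset of cardinality $2$ with minimal representative $x$. Then $I_x$ is an SR-asymmetric coset if and only if there exists $z\in I_x$ such that $n-qz<x$ (where $n-qz$ is reduced modulo $n$ into $\{0,\ldots,n-1\}$).
   Context: Identify $\mathbb{Z}_n$ with $\{0,\ldots,n-1\}$, all arithmetic modulo $n$. The cyclotomic coset of $x$ with respect to $q^2$ is $I_x=\{x,\,q^2x\bmod n\}$; its minimal representative is its least element. The (Hermitian) reciprocal coset of $I_x$ is $I_{n-qx}$. $I_x$ is symmetric if $I_{n-qx}=I_x$ and asymmetric otherwise. If $I_x$ is asymmetric with reciprocal coset $I_y$, with $x,y$ the minimal representatives and $x<y$, then $I_x$ is the FR-asymmetric coset and $I_y$ the SR-asymmetric coset of the pair. *)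

theory Defs
  imports "HOL-Computational_Algebra.Primes"
begin

text \<open>Elements of Z_n are represented by naturals in {0..n-1}.\<close>

definition prime_power :: "nat \<Rightarrow> bool" where
  "prime_power q \<longleftrightarrow> (\<exists>p k. prime p \<and> k \<ge> 1 \<and> q = p ^ k)"

definition cyc_coset :: "nat \<Rightarrow> nat \<Rightarrow> nat \<Rightarrow> nat set" where
  "cyc_coset n q x = {x mod n, (q^2 * x) mod n}"

definition recip_elem :: "nat \<Rightarrow> nat \<Rightarrow> nat \<Rightarrow> nat" where
  "recip_elem n q x = (n - (q * x) mod n) mod n"

definition min_rep :: "nat \<Rightarrow> nat \<Rightarrow> nat \<Rightarrow> nat" where
  "min_rep n q x = Min (cyc_coset n q x)"

definition symmetric_coset :: "nat \<Rightarrow> nat \<Rightarrow> nat \<Rightarrow> bool" where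
  "symmetric_coset n q x \<longleftrightarrow> cyc_coset n q (recip_elem n q x) = cyc_coset n q x"

definition SR_asymmetric :: "nat \<Rightarrow> nat \<Rightarrow> nat \<Rightarrow> bool" where
  "SR_asymmetric n q x \<longleftrightarrow> \<not> symmetric_coset n q x \<and>
     min_rep n q (recip_elem n q x) < min_rep n q x"

end

theory Submission
  imports Defs
begin

text \<open>The map \<open>z \<mapsto> n - q z\<close> commutes with multiplication by \<open>q\<^sup>2\<close> modulo \<open>n\<close>, so the
  reciprocal coset of \<open>I\<^sub>x\<close> is the image of \<open>I\<^sub>x\<close> under this map, and its minimal
  representative is below \<open>x\<close> exactly when some \<open>n - q z\<close> with \<open>z \<in> I\<^sub>x\<close> is. A symmetric
  coset is its own reciprocal, so this inequality already forces asymmetry.\<close>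

lemma recip_elem_less: "0 < n \<Longrightarrow> recip_elem n q x < n"
  by (simp add: recip_elem_def)

lemma int_recip_elem:
  assumes "0 < n"
  shows "int (recip_elem n q x) = (- (int q * int x)) mod int n"
proof (cases "(q * x) mod n = 0")
  case True
  then have "int (q * x) mod int n = 0"
    by (metis of_nat_0 of_nat_mod)
  then show ?thesis
    using True by (simp add: recip_elem_def zmod_zminus1_eq_if)
next
  case False
  then have "int (q * x) mod int n \<noteq> 0"
    by (metis of_nat_0 of_nat_eq_iff of_nat_mod)
  then have "(- (int q * int x)) mod int n = int n - int (q * x) mod int n"
    by (simp add: zmod_zminus1_eq_if)
  moreover have "n - (q * x) mod n < n" "(q * x) mod n < n"
    using False assms by simp_all
  ultimately show ?thesis
    by (simp add: recip_elem_def of_nat_mod of_nat_diff)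
qed

lemma recip_elem_mod: "recip_elem n q (x mod n) = recip_elem n q x"
  by (simp add: recip_elem_def mod_mult_right_eq)

lemma mult_recip_elem_mod:
  assumes "0 < n"
  shows "a * recip_elem n q x mod n = recip_elem n q (a * x mod n)"
proof -
  have "int (a * recip_elem n q x mod n) = (int a * ((- (int q * int x)) mod int n)) mod int n"
    using int_recip_elem[OF assms] by (simp add: of_nat_mod)
  also have "\<dots> = (- (int q * ((int a * int x) mod int n))) mod int n"
    by (metis (no_types, opaque_lifting) mod_minus_eq mod_mult_right_eq mult.left_commute
        mult_minus_right)
  also have "\<dots> = int (recip_elem n q (a * x mod n))"
    using int_recip_elem[OF assms] by (simp add: of_nat_mod)
  finally show ?thesis
    using of_nat_eq_iff by blast
qed

lemma cyc_coset_recip_elem: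
  assumes "0 < n"
  shows "cyc_coset n q (recip_elem n q x) = recip_elem n q ` cyc_coset n q x"
  using mult_recip_elem_mod[OF assms, of "q\<^sup>2"] recip_elem_less[OF assms]
  by (simp add: cyc_coset_def recip_elem_mod)

lemma min_rep_recip_elem:
  assumes "0 < n"
  shows "min_rep n q (recip_elem n q x) = Min (recip_elem n q ` cyc_coset n q x)"
  by (simp add: min_rep_def cyc_coset_recip_elem[OF assms])

lemma SR_asymmetric_iff_min_rep_less:
  "SR_asymmetric n q x \<longleftrightarrow> min_rep n q (recip_elem n q x) < min_rep n q x"
  by (auto simp: SR_asymmetric_def symmetric_coset_def min_rep_def)

theorem mainTheorem10:
  fixes q n x :: nat
  assumes "prime_power q"
    and "n = q ^ 4 - 1"
    and "x < n"
    and "card (cyc_coset n q x) = 2"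
    and "x = min_rep n q x"
  shows "SR_asymmetric n q x \<longleftrightarrow> (\<exists>z \<in> cyc_coset n q x. recip_elem n q z < x)"
proof -
  have "0 < n"
    using \<open>x < n\<close> by simp
  have "SR_asymmetric n q x \<longleftrightarrow> Min (recip_elem n q ` cyc_coset n q x) < x"
    using assms(5) min_rep_recip_elem[OF \<open>0 < n\<close>] SR_asymmetric_iff_min_rep_less by metis
  also have "\<dots> \<longleftrightarrow> (\<exists>z \<in> cyc_coset n q x. recip_elem n q z < x)"
    by (simp add: cyc_coset_def min_less_iff_disj)
  finally show ?thesis .
qed

end
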